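(* Let $\mathcal{G}$ be the complete digraph on $n$ nodes (all ordered pairs $(i,j)$, including $i=j$, are edges), and let $\tau\in\mathbb{Z}_{>0}$ with $\tau\le n$ and $\tau$ dividing $n$. Let $\Pi_0\in\mathbb{R}^{\tau\times\tau}$ be any irreducible permutation matrix, and set $P^*=\Pi_0\otimes \frac{\tau}{n}\mathbb{1}_{n/\tau}\mathbb{1}_{n/\tau}^\top$. Then $P^*$ is an optimal solution of the problem of maximizing $\min_{i,j}\mathbb{P}(T_{ij}(P)\le\tau)$ over all row-stochastic $P\in\mathbb{R}^{n\times n}$ with nonnegative entries, and $\min_{i,j}\mathbb{P}(T_{ij}(P^* )\le\tau)=\frac{\tau}{n}$.
   Context: For a Markov chain $(X_k)_{k\ge0}$ with transition matrix $P$, $T_{ij}=\min\{k\ge1: X_k=j\}$ given $X_0=i$. $\otimes$ denotes the Kronecker product and $\mathbb{1}_m$ the all-ones column vector in $\mathbb{R}^m$. *)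

theory Defs
  imports Complex_Main "HOL-Library.FuncSet"
begin

text \<open>Square matrices of size n are functions nat => nat => real, only entries with
  indices < n are meaningful (indices 0..n-1).\<close>

definition row_stochastic :: "nat \<Rightarrow> (nat \<Rightarrow> nat \<Rightarrow> real) \<Rightarrow> bool" where
  "row_stochastic n P \<longleftrightarrow> (\<forall>i<n. \<forall>j<n. P i j \<ge> 0) \<and> (\<forall>i<n. (\<Sum>j<n. P i j) = 1)"

fun matpow :: "nat \<Rightarrow> (nat \<Rightarrow> nat \<Rightarrow> real) \<Rightarrow> nat \<Rightarrow> (nat \<Rightarrow> nat \<Rightarrow> real)" where
  "matpow n A 0 = (\<lambda>i j. if i = j then 1 else 0)"
| "matpow n A (Suc k) = (\<lambda>i j. \<Sum>l<n. matpow n A k i l * A l j)"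

definition permutation_matrix :: "nat \<Rightarrow> (nat \<Rightarrow> nat \<Rightarrow> real) \<Rightarrow> bool" where
  "permutation_matrix n A \<longleftrightarrow>
     (\<exists>\<sigma>. bij_betw \<sigma> {..<n} {..<n} \<and> (\<forall>i<n. \<forall>j<n. A i j = (if \<sigma> i = j then 1 else 0)))"

definition irreducible_matrix :: "nat \<Rightarrow> (nat \<Rightarrow> nat \<Rightarrow> real) \<Rightarrow> bool" where
  "irreducible_matrix n A \<longleftrightarrow> (\<forall>i<n. \<forall>j<n. \<exists>k. matpow n A k i j > 0)"

text \<open>Kronecker product A \<otimes> B where B is a k x k matrix.\<close>
definition kron :: "(nat \<Rightarrow> nat \<Rightarrow> real) \<Rightarrow> nat \<Rightarrow> (nat \<Rightarrow> nat \<Rightarrow> real) \<Rightarrow> (nat \<Rightarrow> nat \<Rightarrow> real)" where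
  "kron A k B = (\<lambda>a b. A (a div k) (b div k) * B (a mod k) (b mod k))"

text \<open>P(T_ij \<le> t) for the Markov chain with transition matrix P on states {..<n},
  X_0 = i: total probability (under the path law) of trajectories X_1..X_t that visit j
  at some time k in {1..t}.\<close>
definition hit_prob :: "nat \<Rightarrow> (nat \<Rightarrow> nat \<Rightarrow> real) \<Rightarrow> nat \<Rightarrow> nat \<Rightarrow> nat \<Rightarrow> real" where
  "hit_prob n P t i j =
     (\<Sum>x\<in>{x\<in>PiE {1..t} (\<lambda>_. {..<n}). \<exists>k\<in>{1..t}. x k = j}.
        \<Prod>m\<in>{1..t}. P ((x(0 := i)) (m - 1)) (x m))"

definition min_hit_prob :: "nat \<Rightarrow> (nat \<Rightarrow> nat \<Rightarrow> real) \<Rightarrow> nat \<Rightarrow> real" where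
  "min_hit_prob n P t = Min {hit_prob n P t i j | i j. i < n \<and> j < n}"

end

theory Submission
  imports Defs
begin

text \<open>
  Upper bound: a trajectory \<open>X\<^sub>1, \<dots>, X\<^sub>\<tau>\<close> visits at most \<open>\<tau>\<close> distinct states, so
  for every start \<open>i\<close> the probabilities \<open>Pr(T\<^sub>i\<^sub>j \<le> \<tau>)\<close> sum over \<open>j\<close> to at most
  \<open>\<tau>\<close>, and one of these \<open>n\<close> numbers is at most \<open>\<tau>/n\<close>.
  Lower bound for \<open>P\<^sup>*\<close>: the block index moves deterministically along the cycle
  \<open>\<Pi>\<^sub>0\<close> while the position inside the block is resampled uniformly, i.e.
  \<open>(P\<^sup>*)\<^sup>k = \<Pi>\<^sub>0\<^sup>k \<otimes> (\<tau>/n) \<one>\<one>\<^sup>T\<close> for \<open>k \<ge> 1\<close>. Every block is reached from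
  every block at some time \<open>k \<le> \<tau>\<close>, and then every state of it with probability
  \<open>\<tau>/n\<close>.
\<close>

lemma sum_PiE_Suc:
  fixes F :: "(nat \<Rightarrow> nat) \<Rightarrow> 'a::comm_monoid_add"
  shows "(\<Sum>x\<in>PiE {1..Suc t} (\<lambda>_. S). F x) =
    (\<Sum>y\<in>PiE {1..t} (\<lambda>_. S). \<Sum>v\<in>S. F (y(Suc t := v)))"
proof -
  have "{1..Suc t} = insert (Suc t) {1..t}" by auto
  then have "(\<Sum>x\<in>PiE {1..Suc t} (\<lambda>_. S). F x) =
      (\<Sum>x\<in>(\<lambda>(v, y). y(Suc t := v)) ` (S \<times> PiE {1..t} (\<lambda>_. S)). F x)"
    by (simp add: PiE_insert_eq)
  also have "\<dots> = (\<Sum>p\<in>S \<times> PiE {1..t} (\<lambda>_. S). F ((\<lambda>(v, y). y(Suc t := v)) p))"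
    by (subst sum.reindex) (auto intro: inj_combinator)
  also have "\<dots> = (\<Sum>v\<in>S. \<Sum>y\<in>PiE {1..t} (\<lambda>_. S). F (y(Suc t := v)))"
    by (simp add: sum.cartesian_product split_def)
  also have "\<dots> = (\<Sum>y\<in>PiE {1..t} (\<lambda>_. S). \<Sum>v\<in>S. F (y(Suc t := v)))"
    by (rule sum.swap)
  finally show ?thesis .
qed

definition path_weight :: "(nat \<Rightarrow> nat \<Rightarrow> real) \<Rightarrow> nat \<Rightarrow> nat \<Rightarrow> (nat \<Rightarrow> nat) \<Rightarrow> real" where
  "path_weight P t i x = (\<Prod>m\<in>{1..t}. P ((x(0 := i)) (m - 1)) (x m))"

abbreviation paths :: "nat \<Rightarrow> nat \<Rightarrow> (nat \<Rightarrow> nat) set" where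
  "paths n t \<equiv> PiE {1..t} (\<lambda>_. {..<n})"

lemma path_weight_Suc:
  "path_weight P (Suc t) i (y(Suc t := v)) = path_weight P t i y * P ((y(0 := i)) t) v"
proof -
  have "(\<Prod>m\<in>{1..t}. P (((y(Suc t := v))(0 := i)) (m - 1)) ((y(Suc t := v)) m)) = path_weight P t i y"
    unfolding path_weight_def by (rule prod.cong) auto
  then show ?thesis
    by (simp add: path_weight_def)
qed

lemma path_state_less:
  "x \<in> paths n t \<Longrightarrow> i < n \<Longrightarrow> k \<le> t \<Longrightarrow> (x(0 := i)) k < n"
  by (cases "k = 0") (auto simp: PiE_def Pi_def)

lemma path_weight_nonneg:
  assumes "row_stochastic n P" "i < n" "x \<in> paths n t"
  shows "0 \<le> path_weight P t i x"
  unfolding path_weight_def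
proof (rule prod_nonneg)
  fix m assume "m \<in> {1..t}"
  then have "(x(0 := i)) (m - 1) < n" "(x(0 := i)) m < n"
    using path_state_less[OF assms(3,2), of "m - 1"] path_state_less[OF assms(3,2), of m] by auto
  with \<open>m \<in> {1..t}\<close> show "0 \<le> P ((x(0 := i)) (m - 1)) (x m)"
    using assms(1) unfolding row_stochastic_def by auto
qed

lemma sum_path_weight_Suc:
  assumes P: "row_stochastic n P" and i: "i < n"
    and f: "\<And>y v. f (y(Suc t := v)) = f y"
  shows "(\<Sum>x\<in>paths n (Suc t). path_weight P (Suc t) i x * f x) =
    (\<Sum>y\<in>paths n t. path_weight P t i y * f y)"
proof -
  have "(\<Sum>x\<in>paths n (Suc t). path_weight P (Suc t) i x * f x) =
      (\<Sum>y\<in>paths n t. path_weight P t i y * f y * (\<Sum>v<n. P ((y(0 := i)) t) v))"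
    by (subst sum_PiE_Suc) (simp add: path_weight_Suc f sum_distrib_left mult_ac)
  also have "\<dots> = (\<Sum>y\<in>paths n t. path_weight P t i y * f y)"
    using P path_state_less[OF _ i] unfolding row_stochastic_def by (intro sum.cong) auto
  finally show ?thesis .
qed

lemma sum_path_weight:
  assumes "row_stochastic n P" "i < n"
  shows "(\<Sum>x\<in>paths n t. path_weight P t i x) = 1"
proof (induction t)
  case 0
  then show ?case by (simp add: path_weight_def)
next
  case (Suc t)
  then show ?case
    using sum_path_weight_Suc[OF assms, of "\<lambda>_. 1" t] by simp
qed

lemma sum_path_weight_last:
  assumes i: "i < n"
  shows "(\<Sum>x\<in>paths n k. path_weight P k i x * g ((x(0 := i)) k)) =
    (\<Sum>l<n. matpow n P k i l * g l)"
proof (induction k arbitrary: g)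
  case 0
  have "(\<Sum>l<n. matpow n P 0 i l * g l) = (\<Sum>l<n. of_bool (l = i) * g l)"
    by (intro sum.cong) auto
  then show ?case
    using i by (simp add: path_weight_def)
next
  case (Suc k)
  have "(\<Sum>x\<in>paths n (Suc k). path_weight P (Suc k) i x * g ((x(0 := i)) (Suc k))) =
      (\<Sum>y\<in>paths n k. path_weight P k i y * (\<lambda>u. \<Sum>v<n. P u v * g v) ((y(0 := i)) k))"
    by (subst sum_PiE_Suc) (simp add: path_weight_Suc sum_distrib_left mult_ac)
  also have "\<dots> = (\<Sum>l<n. matpow n P k i l * (\<Sum>v<n. P l v * g v))"
    by (rule Suc)
  also have "\<dots> = (\<Sum>l<n. \<Sum>v<n. matpow n P k i l * P l v * g v)"
    by (simp add: sum_distrib_left mult_ac)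
  also have "\<dots> = (\<Sum>v<n. \<Sum>l<n. matpow n P k i l * P l v * g v)"
    by (rule sum.swap)
  also have "\<dots> = (\<Sum>v<n. matpow n P (Suc k) i v * g v)"
    by (simp add: sum_distrib_right)
  finally show ?case .
qed

lemma sum_path_weight_state:
  assumes P: "row_stochastic n P" and i: "i < n" and k: "k \<le> t"
  shows "(\<Sum>x\<in>paths n t. path_weight P t i x * g ((x(0 := i)) k)) =
    (\<Sum>l<n. matpow n P k i l * g l)"
  using k
proof (induction t rule: dec_induct)
  case base
  then show ?case by (rule sum_path_weight_last[OF i])
next
  case (step t)
  then show ?case
    by (subst sum_path_weight_Suc[OF P i]) auto
qed

lemma hit_prob_eq_sum_path_weight:
  "hit_prob n P t i j =
    (\<Sum>x\<in>paths n t. path_weight P t i x * of_bool (\<exists>k\<in>{1..t}. x k = j))"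
proof -
  have "(\<Sum>x\<in>paths n t. path_weight P t i x * of_bool (\<exists>k\<in>{1..t}. x k = j)) =
      (\<Sum>x\<in>paths n t. if \<exists>k\<in>{1..t}. x k = j then path_weight P t i x else 0)"
    by (intro sum.cong) auto
  also have "\<dots> = (\<Sum>x\<in>{x\<in>paths n t. \<exists>k\<in>{1..t}. x k = j}. path_weight P t i x)"
    by (simp add: sum.inter_filter finite_PiE)
  finally show ?thesis
    by (simp add: hit_prob_def path_weight_def)
qed

lemma matpow_le_hit_prob:
  assumes P: "row_stochastic n P" and i: "i < n" and j: "j < n" and k: "k \<in> {1..t}"
  shows "matpow n P k i j \<le> hit_prob n P t i j"
proof -
  have "matpow n P k i j = (\<Sum>l<n. matpow n P k i l * of_bool (l = j))"
    using j by simp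
  also have "\<dots> = (\<Sum>x\<in>paths n t. path_weight P t i x * of_bool ((x(0 := i)) k = j))"
    using k by (intro sum_path_weight_state[OF P i, symmetric]) auto
  also have "\<dots> \<le> hit_prob n P t i j"
    unfolding hit_prob_eq_sum_path_weight using k path_weight_nonneg[OF P i]
    by (intro sum_mono mult_left_mono) auto
  finally show ?thesis .
qed

lemma sum_hit_prob_le:
  assumes P: "row_stochastic n P" and i: "i < n"
  shows "(\<Sum>j<n. hit_prob n P t i j) \<le> real t"
proof -
  have visited: "(\<Sum>j<n. of_bool (\<exists>k\<in>{1..t}. x k = j)) \<le> real t" for x :: "nat \<Rightarrow> nat"
  proof -
    have "(\<Sum>j<n. of_bool (\<exists>k\<in>{1..t}. x k = j)) = real (card ({..<n} \<inter> {j. \<exists>k\<in>{1..t}. x k = j}))"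
      by (simp add: of_bool_def sum.If_cases)
    also have "\<dots> \<le> real (card (x ` {1..t}))"
      by (simp, rule card_mono) auto
    also have "\<dots> \<le> real t"
      using card_image_le[of "{1..t}" x] by simp
    finally show ?thesis .
  qed
  have "(\<Sum>j<n. hit_prob n P t i j) =
      (\<Sum>x\<in>paths n t. path_weight P t i x * (\<Sum>j<n. of_bool (\<exists>k\<in>{1..t}. x k = j)))"
    unfolding hit_prob_eq_sum_path_weight by (subst sum.swap) (simp only: sum_distrib_left)
  also have "\<dots> \<le> (\<Sum>x\<in>paths n t. path_weight P t i x * real t)"
    using path_weight_nonneg[OF P i] visited by (intro sum_mono mult_left_mono) auto
  also have "\<dots> = real t"
    using sum_path_weight[OF P i] by (simp add: sum_distrib_right[symmetric])
  finally show ?thesis .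
qed

lemma finite_hit_probs: "finite {hit_prob n P t i j | i j. i < n \<and> j < n}"
proof -
  have "{hit_prob n P t i j | i j. i < n \<and> j < n} = (\<lambda>(i, j). hit_prob n P t i j) ` ({..<n} \<times> {..<n})"
    by auto
  then show ?thesis by simp
qed

lemma min_hit_prob_le:
  assumes P: "row_stochastic n P" and n: "0 < n"
  shows "min_hit_prob n P t \<le> real t / real n"
proof -
  have "\<exists>j<n. hit_prob n P t 0 j \<le> real t / real n"
  proof (rule ccontr)
    assume "\<not> ?thesis"
    then have "(\<Sum>j<n. real t / real n) < (\<Sum>j<n. hit_prob n P t 0 j)"
      using n by (intro sum_strict_mono) (auto simp: not_le)
    then show False
      using sum_hit_prob_le[OF P n, of t] n by simp
  qed
  then obtain j where j: "j < n" "hit_prob n P t 0 j \<le> real t / real n"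
    by blast
  have "min_hit_prob n P t \<le> hit_prob n P t 0 j"
    unfolding min_hit_prob_def using j n by (intro Min_le finite_hit_probs) blast
  with j show ?thesis by simp
qed

lemma le_min_hit_prob:
  assumes "0 < n" and "\<And>i j. i < n \<Longrightarrow> j < n \<Longrightarrow> c \<le> hit_prob n P t i j"
  shows "c \<le> min_hit_prob n P t"
  unfolding min_hit_prob_def using assms by (intro Min.boundedI finite_hit_probs) auto

lemma sum_lessThan_mult_div_mod:
  fixes g :: "nat \<Rightarrow> 'a::comm_monoid_add"
  shows "(\<Sum>l<\<tau> * m. g l) = (\<Sum>c<\<tau>. \<Sum>r<m. g (c * m + r))"
proof -
  have "(\<Sum>l<\<tau> * m. g l) = (\<Sum>c<\<tau>. \<Sum>l\<in>{c * m..<c * m + m}. g l)"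
    by (simp add: sum.nat_group)
  also have "\<dots> = (\<Sum>c<\<tau>. \<Sum>r<m. g (c * m + r))"
    by (simp add: sum.atLeastLessThan_shift_0 atLeast0LessThan add.commute)
  finally show ?thesis .
qed

lemma matpow_kron:
  assumes "0 < m"
  shows "matpow (\<tau> * m) (kron A m B) k = kron (matpow \<tau> A k) m (matpow m B k)"
proof (induction k)
  case 0
  show ?case by (auto simp: kron_def fun_eq_iff) (metis div_mult_mod_eq)
next
  case (Suc k)
  show ?case
  proof (intro ext)
    fix a b
    have "matpow (\<tau> * m) (kron A m B) (Suc k) a b =
        (\<Sum>l<\<tau> * m. kron (matpow \<tau> A k) m (matpow m B k) a l * kron A m B l b)"
      by (simp add: Suc)
    also have "\<dots> = (\<Sum>c<\<tau>. \<Sum>r<m. matpow \<tau> A k (a div m) c * matpow m B k (a mod m) r *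
        (A c (b div m) * B r (b mod m)))"
      using assms by (simp add: Suc sum_lessThan_mult_div_mod kron_def mult_ac)
    also have "\<dots> = (\<Sum>c<\<tau>. matpow \<tau> A k (a div m) c * A c (b div m)) *
        (\<Sum>r<m. matpow m B k (a mod m) r * B r (b mod m))"
      by (simp add: sum_product mult_ac)
    also have "\<dots> = kron (matpow \<tau> A (Suc k)) m (matpow m B (Suc k)) a b"
      by (simp add: kron_def)
    finally show "matpow (\<tau> * m) (kron A m B) (Suc k) a b =
        kron (matpow \<tau> A (Suc k)) m (matpow m B (Suc k)) a b" .
  qed
qed

lemma row_stochastic_kron:
  assumes A: "row_stochastic \<tau> A" and B: "row_stochastic m B"
  shows "row_stochastic (\<tau> * m) (kron A m B)"
  unfolding row_stochastic_def
proof (intro conjI allI impI)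
  fix a b assume ab: "a < \<tau> * m" "b < \<tau> * m"
  then have "0 < m" by (cases m) auto
  with ab have "a div m < \<tau>" "b div m < \<tau>" "a mod m < m" "b mod m < m"
    by (auto simp: less_mult_imp_div_less mult.commute)
  then show "0 \<le> kron A m B a b"
    using A B unfolding row_stochastic_def kron_def by simp
next
  fix a assume a: "a < \<tau> * m"
  then have m: "0 < m" by (cases m) auto
  have "a div m < \<tau>" "a mod m < m"
    using a m by (auto simp: less_mult_imp_div_less mult.commute)
  then have "(\<Sum>l<\<tau> * m. kron A m B a l) = (\<Sum>c<\<tau>. A (a div m) c * (\<Sum>r<m. B (a mod m) r))"
    using m by (simp add: sum_lessThan_mult_div_mod kron_def sum_distrib_left)
  also have "\<dots> = 1"
    using A B \<open>a div m < \<tau>\<close> \<open>a mod m < m\<close> unfolding row_stochastic_def by simp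
  finally show "(\<Sum>l<\<tau> * m. kron A m B a l) = 1" .
qed

lemma row_stochastic_uniform: "0 < m \<Longrightarrow> row_stochastic m (\<lambda>_ _. 1 / real m)"
  by (simp add: row_stochastic_def)

lemma matpow_uniform:
  assumes "i < m"
  shows "matpow m (\<lambda>_ _. 1 / real m) (Suc k) i j = 1 / real m"
  using assms by (induction k arbitrary: j) (simp_all add: if_distrib if_distribR cong: if_cong)

lemma row_stochastic_permutation_matrix:
  assumes "permutation_matrix \<tau> A"
  shows "row_stochastic \<tau> A"
proof -
  obtain \<sigma> where \<sigma>: "bij_betw \<sigma> {..<\<tau>} {..<\<tau>}"
    and A: "\<forall>i<\<tau>. \<forall>j<\<tau>. A i j = (if \<sigma> i = j then 1 else 0)"
    using assms unfolding permutation_matrix_def by blast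
  have "(\<Sum>j<\<tau>. A i j) = 1" if "i < \<tau>" for i
  proof -
    have "(\<Sum>j<\<tau>. A i j) = (\<Sum>j<\<tau>. if \<sigma> i = j then 1 else 0)"
      using A that by simp
    also have "\<dots> = 1"
      using bij_betwE[OF \<sigma>] that by simp
    finally show ?thesis .
  qed
  then show ?thesis
    using A unfolding row_stochastic_def by simp
qed

lemma matpow_permutation_matrix:
  assumes \<sigma>: "bij_betw \<sigma> {..<\<tau>} {..<\<tau>}"
    and A: "\<forall>i<\<tau>. \<forall>j<\<tau>. A i j = (if \<sigma> i = j then 1 else 0)"
    and c: "c < \<tau>" and d: "d < \<tau>"
  shows "matpow \<tau> A k c d = (if (\<sigma> ^^ k) c = d then 1 else 0)"
  using d
proof (induction k arbitrary: d)
  case 0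
  then show ?case by simp
next
  case (Suc k)
  have "(\<sigma> ^^ k) c < \<tau>"
    using bij_betw_funpow[OF \<sigma>, of k] c by (auto dest: bij_betwE)
  have "matpow \<tau> A (Suc k) c d = (\<Sum>l<\<tau>. if (\<sigma> ^^ k) c = l then A l d else 0)"
    unfolding matpow.simps using Suc.IH by (intro sum.cong) auto
  also have "\<dots> = A ((\<sigma> ^^ k) c) d"
    using \<open>(\<sigma> ^^ k) c < \<tau>\<close> by simp
  finally have "matpow \<tau> A (Suc k) c d = A ((\<sigma> ^^ k) c) d" .
  then show ?case
    using A Suc.prems \<open>(\<sigma> ^^ k) c < \<tau>\<close> by simp
qed

lemma funpow_period_le_card:
  assumes \<sigma>: "bij_betw \<sigma> {..<\<tau>} {..<\<tau>}" and c: "c < \<tau>"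
  obtains p where "1 \<le> p" "p \<le> \<tau>" "(\<sigma> ^^ p) c = c"
proof -
  have range: "(\<sigma> ^^ k) c < \<tau>" for k
    using bij_betw_funpow[OF \<sigma>, of k] c by (auto dest: bij_betwE)
  have "\<not> inj_on (\<lambda>k. (\<sigma> ^^ k) c) {0..\<tau>}"
  proof
    assume "inj_on (\<lambda>k. (\<sigma> ^^ k) c) {0..\<tau>}"
    then have "card {0..\<tau>} \<le> card {..<\<tau>}"
      by (rule card_inj_on_le) (use range in auto)
    then show False by simp
  qed
  then obtain a b where ab: "a < b" "b \<le> \<tau>" "(\<sigma> ^^ a) c = (\<sigma> ^^ b) c"
    unfolding inj_on_def by (metis atLeastAtMost_iff linorder_neqE_nat less_imp_le)
  have "(\<sigma> ^^ a) ((\<sigma> ^^ (b - a)) c) = (\<sigma> ^^ a) c"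
    using ab by (metis funpow_add comp_apply le_add_diff_inverse less_imp_le)
  moreover have "inj_on (\<sigma> ^^ a) {..<\<tau>}"
    using bij_betw_funpow[OF \<sigma>] by (simp add: bij_betw_def)
  ultimately have "(\<sigma> ^^ (b - a)) c = c"
    using range c unfolding inj_on_def by blast
  with ab show ?thesis
    by (intro that[of "b - a"]) auto
qed

lemma funpow_reached_within_card:
  assumes \<sigma>: "bij_betw \<sigma> {..<\<tau>} {..<\<tau>}" and c: "c < \<tau>"
  shows "\<exists>k'\<in>{1..\<tau>}. (\<sigma> ^^ k') c = (\<sigma> ^^ k) c"
proof -
  obtain p where p: "1 \<le> p" "p \<le> \<tau>" "(\<sigma> ^^ p) c = c"
    using funpow_period_le_card[OF assms] .
  have "(\<sigma> ^^ (k mod p)) c = (\<sigma> ^^ k) c"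
    using p(3) by (rule funpow_mod_eq)
  moreover have "k mod p < p"
    using p(1) by simp
  ultimately show ?thesis
  proof (cases "k mod p = 0")
    case True
    with p \<open>(\<sigma> ^^ (k mod p)) c = (\<sigma> ^^ k) c\<close> show ?thesis
      by (intro bexI[of _ p]) auto
  next
    case False
    with p \<open>k mod p < p\<close> \<open>(\<sigma> ^^ (k mod p)) c = (\<sigma> ^^ k) c\<close> show ?thesis
      by (intro bexI[of _ "k mod p"]) auto
  qed
qed

lemma irreducible_permutation_matrix_reaches:
  assumes "permutation_matrix \<tau> A" and "irreducible_matrix \<tau> A"
    and c: "c < \<tau>" and d: "d < \<tau>"
  shows "\<exists>k\<in>{1..\<tau>}. matpow \<tau> A k c d = 1"
proof -
  obtain \<sigma> where \<sigma>: "bij_betw \<sigma> {..<\<tau>} {..<\<tau>}"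
    and A: "\<forall>i<\<tau>. \<forall>j<\<tau>. A i j = (if \<sigma> i = j then 1 else 0)"
    using assms(1) unfolding permutation_matrix_def by blast
  obtain k where "matpow \<tau> A k c d > 0"
    using assms(2) c d unfolding irreducible_matrix_def by blast
  then have "(\<sigma> ^^ k) c = d"
    using matpow_permutation_matrix[OF \<sigma> A c d] by (simp split: if_splits)
  then obtain k' where "k' \<in> {1..\<tau>}" "(\<sigma> ^^ k') c = d"
    using funpow_reached_within_card[OF \<sigma> c, of k] by auto
  then show ?thesis
    using matpow_permutation_matrix[OF \<sigma> A c d] by auto
qed

lemma hit_prob_kron_uniform_ge:
  assumes "permutation_matrix \<tau> A" and "irreducible_matrix \<tau> A" and m: "0 < m"
    and a: "a < \<tau> * m" and b: "b < \<tau> * m"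
  shows "1 / real m \<le> hit_prob (\<tau> * m) (kron A m (\<lambda>_ _. 1 / real m)) \<tau> a b"
proof -
  have stochastic: "row_stochastic (\<tau> * m) (kron A m (\<lambda>_ _. 1 / real m))"
    using assms(1) m
    by (intro row_stochastic_kron row_stochastic_permutation_matrix row_stochastic_uniform)
  have "a div m < \<tau>" "b div m < \<tau>"
    using a b by (auto simp: less_mult_imp_div_less mult.commute)
  then obtain k where k: "k \<in> {1..\<tau>}" "matpow \<tau> A k (a div m) (b div m) = 1"
    using irreducible_permutation_matrix_reaches[OF assms(1,2)] by blast
  then obtain k' where "k = Suc k'"
    by (cases k) auto
  have "matpow (\<tau> * m) (kron A m (\<lambda>_ _. 1 / real m)) k a b =
      matpow \<tau> A k (a div m) (b div m) * matpow m (\<lambda>_ _. 1 / real m) k (a mod m) (b mod m)"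
    unfolding matpow_kron[OF m] by (simp add: kron_def)
  also have "\<dots> = 1 / real m"
    using k(2) unfolding \<open>k = Suc k'\<close> matpow_uniform[OF mod_less_divisor[OF m]] by simp
  finally show ?thesis
    using matpow_le_hit_prob[OF stochastic a b k(1)] by simp
qed

theorem lemma1:
  fixes n \<tau> :: nat and \<Pi>0 :: "nat \<Rightarrow> nat \<Rightarrow> real"
  assumes "0 < \<tau>" and "\<tau> \<le> n" and "\<tau> dvd n"
    and "permutation_matrix \<tau> \<Pi>0" and "irreducible_matrix \<tau> \<Pi>0"
  defines "Pstar \<equiv> kron \<Pi>0 (n div \<tau>) (\<lambda>_ _. real \<tau> / real n)"
  shows "row_stochastic n Pstar
    \<and> (\<forall>P. row_stochastic n P \<longrightarrow> min_hit_prob n P \<tau> \<le> min_hit_prob n Pstar \<tau>)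
    \<and> min_hit_prob n Pstar \<tau> = real \<tau> / real n"
proof -
  define m where "m = n div \<tau>"
  have n: "n = \<tau> * m" and "0 < n"
    using assms(1-3) by (auto simp: m_def)
  then have m: "0 < m" by simp
  have Pstar: "Pstar = kron \<Pi>0 m (\<lambda>_ _. 1 / real m)"
    using assms(1) unfolding Pstar_def m_def[symmetric] n by simp
  have stochastic: "row_stochastic n Pstar"
    unfolding Pstar n using assms(4) m
    by (intro row_stochastic_kron row_stochastic_permutation_matrix row_stochastic_uniform)
  have "real \<tau> / real n \<le> hit_prob n Pstar \<tau> a b" if "a < n" "b < n" for a b
    using hit_prob_kron_uniform_ge[OF assms(4,5) m] that assms(1) unfolding Pstar n by simp
  then have "min_hit_prob n Pstar \<tau> = real \<tau> / real n"
    using le_min_hit_prob[OF \<open>0 < n\<close>] min_hit_prob_le[OF stochastic \<open>0 < n\<close>]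
    by (simp add: order_antisym)
  with stochastic min_hit_prob_le \<open>0 < n\<close> show ?thesis
    by auto
qed

end
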